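(* Let $S\subset\mathbb{R}^2$ be a square of side length $2$. There exists a sequence $(\Omega_k)_{k\in\mathbb{N}}$ of bounded open sets, each a finite disjoint union of disks, with $\Omega_k\subset S$ and $|\Omega_k|=\pi$ for all $k$, such that $$\liminf_{k\to\infty}\frac{\mu_k(\Omega_k)}{\mu_k(S)}=0.$$
   Context: For a bounded open set $U$ with Lipschitz boundary, $0=\mu_0(U)\le\mu_1(U)\le\mu_2(U)\le\cdots$ denote the eigenvalues of the Neumann Laplacian on $U$ repeated with multiplicity (for disconnected $U$, $0$ has multiplicity equal to the number of components). $|\cdot|$ denotes area. *)

theory Defs
  imports "HOL-Analysis.Analysis" "HOL-Library.Liminf_Limsup"
begin

definition grad :: "(real^2 \<Rightarrow> real) \<Rightarrow> real^2 \<Rightarrow> real^2" where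
  "grad f x = (\<chi> i. frechet_derivative f (at x) (axis i 1))"

text \<open>Admissible test functions for the Neumann problem on an open set U:
  C^1 functions on U lying in H^1(U) (by Meyers--Serrin these are dense in H^1(U)).\<close>
definition H1C1 :: "(real^2) set \<Rightarrow> (real^2 \<Rightarrow> real) \<Rightarrow> bool" where
  "H1C1 U f \<longleftrightarrow> (\<forall>x\<in>U. f differentiable (at x)) \<and> continuous_on U (grad f)
     \<and> (\<lambda>x. (f x)\<^sup>2) integrable_on U \<and> (\<lambda>x. (norm (grad f x))\<^sup>2) integrable_on U"

definition rayleigh :: "(real^2) set \<Rightarrow> (real^2 \<Rightarrow> real) \<Rightarrow> real" where
  "rayleigh U g = integral U (\<lambda>x. (norm (grad g x))\<^sup>2) / integral U (\<lambda>x. (g x)\<^sup>2)"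

text \<open>Neumann eigenvalues (counted from 0, with multiplicity) via the
  Courant--Fischer min-max principle:
  mu_k(U) = inf over (k+1)-dimensional subspaces V of H^1(U) of sup of the Rayleigh quotient on V.\<close>
definition neumann_eig :: "nat \<Rightarrow> (real^2) set \<Rightarrow> real" where
  "neumann_eig k U = Inf { Sup { rayleigh U (\<lambda>x. \<Sum>j\<le>k. c j * f j x) | c. \<exists>j\<le>k. c j \<noteq> 0 }
      | f. (\<forall>j\<le>k. H1C1 U (f j))
           \<and> (\<forall>c. (\<forall>x\<in>U. (\<Sum>j\<le>k. c j * f j x) = 0) \<longrightarrow> (\<forall>j\<le>k. c j = 0)) }"

definition finite_disjoint_disks :: "(real^2) set \<Rightarrow> bool" where
  "finite_disjoint_disks \<Omega> \<longleftrightarrow> (\<exists>D :: ((real^2) \<times> real) set. finite D \<and> (\<forall>(c,r)\<in>D. r > 0)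
     \<and> (\<forall>d1\<in>D. \<forall>d2\<in>D. d1 \<noteq> d2 \<longrightarrow> ball (fst d1) (snd d1) \<inter> ball (fst d2) (snd d2) = {})
     \<and> \<Omega> = (\<Union>(c,r)\<in>D. ball c r))"

end

theory Submission
  imports Defs
begin

(* Place the (k+1)^2 disks of radius 1/(k+1) centred at the points of a regular
   (k+1) x (k+1) grid in S: they are pairwise disjoint, lie in S and have total area pi.
   The indicator functions of k+1 of these disks are linearly independent and locally
   constant on their union Omega_k, so every function in their span has Rayleigh quotient 0
   and the min-max value mu_k(Omega_k) is 0.  Hence every quotient mu_k(Omega_k)/mu_k(S)
   vanishes, whatever mu_k(S) is, and so does the liminf.

   The analytic content is the lower bound: the supremum of the Rayleigh quotient over a
   (k+1)-dimensional span of admissible functions is finite and nonnegative.  Finiteness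
   follows by homogeneity from compactness of the unit sphere of coefficient vectors,
   on which the Gram matrix of the functions is positive definite. *)

section \<open>Rayleigh quotients on finite-dimensional spans\<close>

definition quad_form :: "nat \<Rightarrow> (nat \<Rightarrow> nat \<Rightarrow> real) \<Rightarrow> (nat \<Rightarrow> real) \<Rightarrow> real" where
  "quad_form k M c = (\<Sum>i\<le>k. \<Sum>j\<le>k. c i * c j * M i j)"

lemma continuous_on_quad_form: "continuous_on S (quad_form k M)"
proof -
  have "continuous_on UNIV (quad_form k M)"
    unfolding quad_form_def by (intro continuous_intros continuous_on_product_coordinates)
  then show ?thesis by (rule continuous_on_subset) simp
qed

lemma quad_form_cong: "(\<And>j. j \<le> k \<Longrightarrow> c j = c' j) \<Longrightarrow> quad_form k M c = quad_form k M c'"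
  unfolding quad_form_def by (intro sum.cong) auto

lemma quad_form_scale: "quad_form k M (\<lambda>j. c j / t) = quad_form k M c / t\<^sup>2"
  unfolding quad_form_def sum_divide_distrib by (simp add: power2_eq_square)

(* Coefficient vectors are functions nat => real vanishing beyond k; as a subset of a
   product of intervals, their unit sphere is compact in the product topology. *)
definition unit_coeffs :: "nat \<Rightarrow> (nat \<Rightarrow> real) set" where
  "unit_coeffs k = Pi\<^sub>E UNIV (\<lambda>j. if j \<le> k then {-1..1} else {0}) \<inter> {c. (\<Sum>j\<le>k. (c j)\<^sup>2) = 1}"

lemma compact_unit_coeffs: "compact (unit_coeffs k)"
proof -
  have "compactin (product_topology (\<lambda>i. euclidean) UNIV) (Pi\<^sub>E UNIV (\<lambda>j. if j \<le> k then {-1..1::real} else {0}))"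
    by (subst compactin_PiE) simp
  then have "compact (Pi\<^sub>E UNIV (\<lambda>j. if j \<le> k then {-1..1::real} else {0}))"
    by (simp add: euclidean_product_topology)
  moreover have "closed {c::nat\<Rightarrow>real. (\<Sum>j\<le>k. (c j)\<^sup>2) = 1}"
    by (intro closed_Collect_eq continuous_intros continuous_on_product_coordinates)
  ultimately show ?thesis unfolding unit_coeffs_def by blast
qed

lemma normalize_into_unit_coeffs:
  fixes c :: "nat \<Rightarrow> real"
  assumes "\<exists>j\<le>k. c j \<noteq> 0"
  defines "s \<equiv> sqrt (\<Sum>j\<le>k. (c j)\<^sup>2)"
  shows "0 < s" and "(\<lambda>j. if j \<le> k then c j / s else 0) \<in> unit_coeffs k"
proof -
  obtain j0 where j0: "j0 \<le> k" "c j0 \<noteq> 0" using assms by blast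
  have le: "(c j)\<^sup>2 \<le> (\<Sum>j\<le>k. (c j)\<^sup>2)" if "j \<le> k" for j
    by (rule member_le_sum) (use that in auto)
  from le[OF j0(1)] j0(2) have pos: "0 < (\<Sum>j\<le>k. (c j)\<^sup>2)"
    by (metis less_le_trans zero_less_power2)
  then show "0 < s" by (simp add: s_def)
  have "c j / s \<in> {-1..1}" if "j \<le> k" for j
  proof -
    have "\<bar>c j\<bar> \<le> s"
      using real_sqrt_le_mono[OF le[OF that]] by (simp add: s_def)
    then show ?thesis
      using \<open>0 < s\<close> by (simp add: abs_le_iff divide_le_eq le_divide_eq)
  qed
  moreover have "(\<Sum>j\<le>k. (c j / s)\<^sup>2) = 1"
    using pos by (simp add: power_divide s_def sum_divide_distrib[symmetric])
  ultimately show "(\<lambda>j. if j \<le> k then c j / s else 0) \<in> unit_coeffs k"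
    by (simp add: unit_coeffs_def PiE_UNIV_domain)
qed

lemma bdd_above_quad_form_ratio:
  assumes pos: "\<And>c. \<exists>j\<le>k. c j \<noteq> 0 \<Longrightarrow> 0 < quad_form k D c"
  shows "bdd_above {quad_form k N c / quad_form k D c | c. \<exists>j\<le>k. c j \<noteq> 0}"
proof -
  let ?r = "\<lambda>c. quad_form k N c / quad_form k D c"
  have "\<exists>j\<le>k. c j \<noteq> 0" if "c \<in> unit_coeffs k" for c
  proof (rule ccontr)
    assume "\<not> (\<exists>j\<le>k. c j \<noteq> 0)"
    then have "(\<Sum>j\<le>k. (c j)\<^sup>2) = 0" by simp
    with that show False by (simp add: unit_coeffs_def)
  qed
  then have "continuous_on (unit_coeffs k) ?r"
    using pos by (intro continuous_on_divide continuous_on_quad_form) force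
  then have "bdd_above (?r ` unit_coeffs k)"
    by (intro bounded_imp_bdd_above compact_imp_bounded compact_continuous_image compact_unit_coeffs)
  then obtain B where B: "\<And>c. c \<in> unit_coeffs k \<Longrightarrow> ?r c \<le> B"
    by (auto simp: bdd_above_def)
  have "?r c \<le> B" if c: "\<exists>j\<le>k. c j \<noteq> 0" for c
  proof -
    define s where "s = sqrt (\<Sum>j\<le>k. (c j)\<^sup>2)"
    let ?c' = "\<lambda>j. if j \<le> k then c j / s else 0"
    have "0 < s" "?c' \<in> unit_coeffs k"
      using normalize_into_unit_coeffs[OF c] unfolding s_def by auto
    have "quad_form k M ?c' = quad_form k M c / s\<^sup>2" for M
      by (subst quad_form_scale[symmetric], rule quad_form_cong) simp
    then have "?r ?c' = ?r c"
      using \<open>0 < s\<close> by simp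
    with B[OF \<open>?c' \<in> unit_coeffs k\<close>] show ?thesis by simp
  qed
  then show ?thesis by (intro bdd_aboveI[where M = B]) blast
qed

lemma integrable_inner_if_square_integrable:
  fixes F G :: "real^2 \<Rightarrow> 'b::euclidean_space"
  assumes U: "U \<in> sets lebesgue" and "continuous_on U F" "continuous_on U G"
    and "(\<lambda>x. (norm (F x))\<^sup>2) integrable_on U" "(\<lambda>x. (norm (G x))\<^sup>2) integrable_on U"
  shows "(\<lambda>x. F x \<bullet> G x) integrable_on U"
proof (rule measurable_bounded_by_integrable_imp_integrable)
  show "(\<lambda>x. F x \<bullet> G x) \<in> borel_measurable (lebesgue_on U)"
    by (intro continuous_imp_measurable_on_sets_lebesgue continuous_intros assms)
  show "(\<lambda>x. (norm (F x))\<^sup>2 + (norm (G x))\<^sup>2) integrable_on U"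
    using assms by (intro integrable_add)
  show "norm (F x \<bullet> G x) \<le> (norm (F x))\<^sup>2 + (norm (G x))\<^sup>2" for x
  proof -
    have "norm (F x \<bullet> G x) \<le> norm (F x) * norm (G x)"
      by (simp add: Cauchy_Schwarz_ineq2)
    moreover have "0 \<le> (norm (F x) - norm (G x))\<^sup>2" "0 \<le> norm (F x) * norm (G x)"
      by simp_all
    ultimately show ?thesis by (simp add: power2_eq_square algebra_simps)
  qed
qed (rule U)

lemma power2_norm_sum_scaleR:
  fixes F :: "nat \<Rightarrow> 'a::real_inner"
  shows "(norm (\<Sum>j\<le>k. c j *\<^sub>R F j))\<^sup>2 = (\<Sum>i\<le>k. \<Sum>j\<le>k. c i * c j * (F i \<bullet> F j))"
  by (simp add: power2_norm_eq_inner inner_sum_left inner_sum_right sum_distrib_left mult.assoc)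
     (intro sum.cong refl, simp add: inner_commute)

definition gram :: "(real^2) set \<Rightarrow> (nat \<Rightarrow> real^2 \<Rightarrow> 'b::real_inner) \<Rightarrow> nat \<Rightarrow> nat \<Rightarrow> real" where
  "gram U F i j = integral U (\<lambda>x. F i x \<bullet> F j x)"

lemma has_integral_norm_sum_square:
  fixes F :: "nat \<Rightarrow> real^2 \<Rightarrow> 'b::euclidean_space"
  assumes U: "U \<in> sets lebesgue" and cont: "\<And>j. j \<le> k \<Longrightarrow> continuous_on U (F j)"
    and int: "\<And>j. j \<le> k \<Longrightarrow> (\<lambda>x. (norm (F j x))\<^sup>2) integrable_on U"
  shows "((\<lambda>x. (norm (\<Sum>j\<le>k. c j *\<^sub>R F j x))\<^sup>2) has_integral quad_form k (gram U F) c) U"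
proof -
  have "(\<lambda>x. F i x \<bullet> F j x) integrable_on U" if "i \<le> k" "j \<le> k" for i j
    using that by (intro integrable_inner_if_square_integrable U cont int)
  then show ?thesis
    unfolding power2_norm_sum_scaleR quad_form_def gram_def
    by (intro has_integral_sum finite_atMost ballI has_integral_mult_right integrable_integral) auto
qed

lemma grad_eq_if_has_derivative:
  "(g has_derivative g') (at x) \<Longrightarrow> grad g x = (\<chi> i. g' (axis i 1))"
  unfolding grad_def by (simp add: frechet_derivative_at[symmetric])

lemma grad_sum:
  assumes "\<And>j. j \<le> k \<Longrightarrow> f j differentiable (at x)"
  shows "grad (\<lambda>x. \<Sum>j\<le>k. c j * f j x) x = (\<Sum>j\<le>k. c j *\<^sub>R grad (f j) x)"
proof -
  have "((\<lambda>x. \<Sum>j\<le>k. c j * f j x) has_derivative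
         (\<lambda>h. \<Sum>j\<le>k. c j * frechet_derivative (f j) (at x) h)) (at x)"
    using assms by (intro has_derivative_sum has_derivative_mult_right) (simp add: frechet_derivative_works)
  then have "grad (\<lambda>x. \<Sum>j\<le>k. c j * f j x) x
      = (\<chi> i. \<Sum>j\<le>k. c j * frechet_derivative (f j) (at x) (axis i 1))"
    by (rule grad_eq_if_has_derivative)
  then show ?thesis
    by (simp add: grad_def vec_eq_iff)
qed

lemma measure_ball_real2:
  assumes "0 \<le> r"
  shows "measure lebesgue (ball (c::real^2) r) = pi * r\<^sup>2"
proof -
  have "unit_ball_vol 2 = pi"
    using unit_ball_vol_numeral(1)[of Num.One] by simp
  then show ?thesis
    using content_ball[OF assms, of c] by (simp add: measure_completion)
qed

lemma integral_pos_if_continuous: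
  fixes h :: "real^2 \<Rightarrow> real"
  assumes U: "open U" and "continuous_on U h" and h_int: "h integrable_on U"
    and nonneg: "\<And>x. x \<in> U \<Longrightarrow> 0 \<le> h x" and "x0 \<in> U" and "0 < h x0"
  shows "0 < integral U h"
proof -
  define m where "m = h x0 / 2"
  have "open (h -` {m<..} \<inter> U)" "x0 \<in> h -` {m<..} \<inter> U"
    using assms by (auto simp: m_def continuous_on_open_vimage)
  then obtain e where "e > 0" and ball: "ball x0 e \<subseteq> h -` {m<..} \<inter> U"
    by (meson open_contains_ball)
  then have inter: "ball x0 e \<inter> U = ball x0 e" by blast
  have restrict: "(\<lambda>x. if x \<in> ball x0 e then m else 0) integrable_on U"
    by (simp only: integrable_restrict_Int inter integrable_on_const lmeasurable_ball)
  have "0 < m * measure lebesgue (ball x0 e)"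
    using \<open>e > 0\<close> \<open>0 < h x0\<close> by (simp add: m_def measure_ball_real2)
  also have "\<dots> = integral (ball x0 e) (\<lambda>x. m * 1)"
    by (simp only: integral_mult_right lmeasure_integral[OF lmeasurable_ball])
  also have "\<dots> = integral U (\<lambda>x. if x \<in> ball x0 e then m else 0)"
    by (simp only: mult_1_right integral_restrict_Int inter)
  also have "\<dots> \<le> integral U h"
    using ball nonneg by (intro integral_le restrict h_int) (auto simp: less_imp_le)
  finally show ?thesis .
qed

lemma rayleigh_nonneg: "0 \<le> rayleigh U g"
proof -
  have "0 \<le> integral U h" if "\<And>x. 0 \<le> h x" for h :: "real^2 \<Rightarrow> real"
    using that by (cases "h integrable_on U") (auto intro: integral_nonneg simp: not_integrable_integral)
  then show ?thesis unfolding rayleigh_def by simp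
qed

definition admissible_basis :: "nat \<Rightarrow> (real^2) set \<Rightarrow> (nat \<Rightarrow> real^2 \<Rightarrow> real) \<Rightarrow> bool" where
  "admissible_basis k U f \<longleftrightarrow> (\<forall>j\<le>k. H1C1 U (f j))
     \<and> (\<forall>c. (\<forall>x\<in>U. (\<Sum>j\<le>k. c j * f j x) = 0) \<longrightarrow> (\<forall>j\<le>k. c j = 0))"

definition span_rayleigh :: "nat \<Rightarrow> (real^2) set \<Rightarrow> (nat \<Rightarrow> real^2 \<Rightarrow> real) \<Rightarrow> real set" where
  "span_rayleigh k U f = {rayleigh U (\<lambda>x. \<Sum>j\<le>k. c j * f j x) | c. \<exists>j\<le>k. c j \<noteq> 0}"

lemma neumann_eig_altdef:
  "neumann_eig k U = Inf {Sup (span_rayleigh k U f) | f. admissible_basis k U f}"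
  unfolding neumann_eig_def span_rayleigh_def admissible_basis_def ..

lemma H1C1_continuous_on: "H1C1 U f \<Longrightarrow> continuous_on U f"
  unfolding H1C1_def by (meson continuous_at_imp_continuous_on differentiable_imp_continuous_within)

lemma rayleigh_sum_eq_quad_form_ratio:
  assumes U: "open U" and H: "\<And>j. j \<le> k \<Longrightarrow> H1C1 U (f j)"
  shows "rayleigh U (\<lambda>x. \<Sum>j\<le>k. c j * f j x)
       = quad_form k (gram U (\<lambda>j. grad (f j))) c / quad_form k (gram U f) c"
proof -
  have Ul: "U \<in> sets lebesgue"
    using U by (simp add: borel_open sets_completionI_sets)
  have "integral U (\<lambda>x. (\<Sum>j\<le>k. c j * f j x)\<^sup>2) = quad_form k (gram U f) c"
    using has_integral_norm_sum_square[of U k f c] Ul H1C1_continuous_on[OF H] H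
    by (simp add: H1C1_def integral_unique)
  moreover have "integral U (\<lambda>x. (norm (grad (\<lambda>x. \<Sum>j\<le>k. c j * f j x) x))\<^sup>2)
      = integral U (\<lambda>x. (norm (\<Sum>j\<le>k. c j *\<^sub>R grad (f j) x))\<^sup>2)"
    using H by (intro integral_cong) (simp add: grad_sum H1C1_def)
  moreover have "\<dots> = quad_form k (gram U (\<lambda>j. grad (f j))) c"
    using has_integral_norm_sum_square[of U k "\<lambda>j. grad (f j)" c] Ul H
    by (simp add: H1C1_def integral_unique)
  ultimately show ?thesis
    unfolding rayleigh_def by simp
qed

lemma quad_form_gram_pos:
  assumes U: "open U" and f: "admissible_basis k U f" and c: "\<exists>j\<le>k. c j \<noteq> 0"
  shows "0 < quad_form k (gram U f) c"
proof -
  let ?h = "\<lambda>x. (\<Sum>j\<le>k. c j * f j x)\<^sup>2"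
  have H: "\<And>j. j \<le> k \<Longrightarrow> H1C1 U (f j)"
    using f by (simp add: admissible_basis_def)
  obtain x0 where "x0 \<in> U" "(\<Sum>j\<le>k. c j * f j x0) \<noteq> 0"
    using f c by (auto simp: admissible_basis_def)
  have "(?h has_integral quad_form k (gram U f) c) U"
    using has_integral_norm_sum_square[of U k f c] U H1C1_continuous_on[OF H] H
    by (simp add: H1C1_def borel_open sets_completionI_sets)
  moreover have "0 < integral U ?h"
  proof (rule integral_pos_if_continuous[OF U])
    show "continuous_on U ?h"
      using H1C1_continuous_on[OF H] by (intro continuous_intros) auto
    show "?h integrable_on U"
      using \<open>(?h has_integral _) U\<close> by blast
  qed (use \<open>x0 \<in> U\<close> \<open>(\<Sum>j\<le>k. c j * f j x0) \<noteq> 0\<close> in auto)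
  ultimately show ?thesis
    by (simp add: integral_unique)
qed

lemma bdd_above_span_rayleigh:
  assumes "open U" and "admissible_basis k U f"
  shows "bdd_above (span_rayleigh k U f)"
  using bdd_above_quad_form_ratio[OF quad_form_gram_pos[OF assms]] assms
  by (simp add: span_rayleigh_def rayleigh_sum_eq_quad_form_ratio admissible_basis_def)

section \<open>Vanishing Neumann eigenvalues\<close>

lemma neumann_eig_eq_0I:
  assumes U: "open U" and f: "admissible_basis k U f"
    and grad0: "\<And>c x. x \<in> U \<Longrightarrow> grad (\<lambda>x. \<Sum>j\<le>k. c j * f j x) x = 0"
  shows "neumann_eig k U = 0"
  unfolding neumann_eig_altdef
proof (rule cInf_eq_minimum)
  have "rayleigh U (\<lambda>x. \<Sum>j\<le>k. c j * f j x) = 0" for c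
    using grad0 by (simp add: rayleigh_def integral_cong[of U _ "\<lambda>x. 0"])
  moreover have "\<exists>c::nat \<Rightarrow> real. \<exists>j\<le>k. c j \<noteq> 0"
    by (intro exI[of _ "\<lambda>_. 1"]) auto
  ultimately have "span_rayleigh k U f = {0}"
    unfolding span_rayleigh_def by auto
  with f show "0 \<in> {Sup (span_rayleigh k U f) | f. admissible_basis k U f}"
    by (intro CollectI exI[of _ f]) simp
next
  fix y assume "y \<in> {Sup (span_rayleigh k U f) | f. admissible_basis k U f}"
  then obtain g where g: "admissible_basis k U g" and y: "y = Sup (span_rayleigh k U g)"
    by blast
  have "rayleigh U (\<lambda>x. \<Sum>j\<le>k. 1 * g j x) \<in> span_rayleigh k U g"
    unfolding span_rayleigh_def by (intro CollectI exI[of _ "\<lambda>_. 1"]) auto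
  then have "rayleigh U (\<lambda>x. \<Sum>j\<le>k. 1 * g j x) \<le> y"
    unfolding y using bdd_above_span_rayleigh[OF U g] by (rule cSup_upper)
  then show "0 \<le> y"
    using rayleigh_nonneg by (rule order_trans[rotated])
qed

lemma has_derivative_locally_constant:
  assumes "open W" "x \<in> W" "\<And>y. y \<in> W \<Longrightarrow> g y = g x"
  shows "(g has_derivative (\<lambda>h. 0)) (at x)"
  using has_derivative_transform_within_open[OF has_derivative_const[of "g x"] assms(1,2)] assms(3)
  by simp

lemma has_derivative_indicator_clopen:
  assumes "open B" "open (U - B)" "x \<in> U"
  shows "(indicator B has_derivative (\<lambda>h. 0 :: real)) (at x)"
proof (cases "x \<in> B")
  case True
  with \<open>open B\<close> show ?thesis
    by (intro has_derivative_locally_constant) auto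
next
  case False
  with \<open>open (U - B)\<close> \<open>x \<in> U\<close> show ?thesis
    by (intro has_derivative_locally_constant[of "U - B"]) auto
qed

lemma H1C1_indicator_clopen:
  assumes "open B" "open (U - B)" "B \<subseteq> U" "B \<in> lmeasurable"
  shows "H1C1 U (indicator B)"
proof -
  have grad0: "grad (indicator B) x = 0" if "x \<in> U" for x
    using grad_eq_if_has_derivative[OF has_derivative_indicator_clopen[OF assms(1,2) that]]
    by (simp add: vec_eq_iff)
  have "(\<lambda>x. (indicator B x)\<^sup>2) = (indicator B :: real^2 \<Rightarrow> real)"
    by (simp add: indicator_def fun_eq_iff)
  then have "(\<lambda>x. (indicator B x :: real)\<^sup>2) integrable_on U"
    using assms(3,4) by (simp add: integrable_on_indicator Int_absorb2)
  moreover have "(indicator B :: real^2 \<Rightarrow> real) differentiable (at x)" if "x \<in> U" for x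
    using has_derivative_indicator_clopen[OF assms(1,2) that] by (auto simp: differentiable_def)
  ultimately show ?thesis
    unfolding H1C1_def using grad0
    by (simp add: continuous_on_eq[OF continuous_on_const] integrable_eq[OF integrable_0])
qed

lemma neumann_eig_eq_0_if_disjoint_open_parts:
  assumes U: "open U"
    and B_open: "\<And>j. j \<le> k \<Longrightarrow> open (B j)" and rest_open: "\<And>j. j \<le> k \<Longrightarrow> open (U - B j)"
    and B_sub: "\<And>j. j \<le> k \<Longrightarrow> B j \<subseteq> U" and B_meas: "\<And>j. j \<le> k \<Longrightarrow> B j \<in> lmeasurable"
    and B_ne: "\<And>j. j \<le> k \<Longrightarrow> B j \<noteq> {}"
    and B_disj: "\<And>i j. i \<le> k \<Longrightarrow> j \<le> k \<Longrightarrow> i \<noteq> j \<Longrightarrow> B i \<inter> B j = {}"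
  shows "neumann_eig k U = 0"
proof (rule neumann_eig_eq_0I[OF U])
  define f :: "nat \<Rightarrow> real^2 \<Rightarrow> real" where "f j = indicator (B j)" for j
  have "c i = 0" if "\<forall>x\<in>U. (\<Sum>j\<le>k. c j * f j x) = 0" "i \<le> k" for c i
  proof -
    obtain x where "x \<in> B i" using B_ne[OF \<open>i \<le> k\<close>] by blast
    then have "(\<Sum>j\<le>k. c j * f j x) = (\<Sum>j\<le>k. if j = i then c j else 0)"
      using B_disj \<open>i \<le> k\<close> by (intro sum.cong) (auto simp: f_def indicator_def)
    also have "\<dots> = c i"
      using \<open>i \<le> k\<close> by simp
    finally show ?thesis
      using that B_sub[OF \<open>i \<le> k\<close>] \<open>x \<in> B i\<close> by auto
  qed
  then show "admissible_basis k U f"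
    using H1C1_indicator_clopen[OF B_open rest_open B_sub B_meas]
    by (simp add: admissible_basis_def f_def)
  fix c x assume "x \<in> U"
  have "((\<lambda>x. \<Sum>j\<le>k. c j * f j x) has_derivative (\<lambda>h. \<Sum>j\<le>k. c j * 0)) (at x)"
    unfolding f_def using has_derivative_indicator_clopen[OF B_open rest_open \<open>x \<in> U\<close>]
    by (intro has_derivative_sum has_derivative_mult_right) auto
  then show "grad (\<lambda>x. \<Sum>j\<le>k. c j * f j x) x = 0"
    by (simp add: grad_eq_if_has_derivative vec_eq_iff)
qed

section \<open>A grid of disks in a square\<close>

lemma grid_coordinate_bounds:
  fixes s :: real and i n :: nat
  assumes "i < n" "\<bar>s - (2 * real i + 1) / n\<bar> < 1 / n"
  shows "0 < s \<and> s < 2"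
proof -
  have n: "0 < real n" using assms(1) by simp
  have "real i + 1 \<le> real n" using assms(1) by (simp flip: of_nat_Suc)
  moreover have "\<bar>s * n - (2 * real i + 1)\<bar> < 1"
    using assms(2) n by (simp add: field_simps abs_less_iff)
  ultimately have "0 < s * n" "s * n < 2 * n"
    unfolding abs_less_iff by linarith+
  then show ?thesis
    using n by (simp add: zero_less_mult_iff)
qed

lemma one_le_power2_diff_of_nat:
  assumes "i \<noteq> j"
  shows "1 \<le> (real i - real j)\<^sup>2"
proof -
  have "real i + 1 \<le> real j \<or> real j + 1 \<le> real i"
    using assms by (cases "i < j") (auto simp flip: of_nat_Suc)
  then have "1 \<le> \<bar>real i - real j\<bar>"
    by linarith
  then show ?thesis
    by (metis one_le_power power2_abs)
qed

locale orthonormal_pair =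
  fixes u v :: "real^2"
  assumes norm_u: "norm u = 1" and norm_v: "norm v = 1" and orthogonal_uv: "u \<bullet> v = 0"
begin

lemma inner_self_u: "u \<bullet> u = 1" and inner_self_v: "v \<bullet> v = 1" and orthogonal_vu: "v \<bullet> u = 0"
  using norm_u norm_v orthogonal_uv by (simp_all add: dot_square_norm inner_commute)

lemma power2_norm_scaleR_add: "(norm (s *\<^sub>R u + t *\<^sub>R v))\<^sup>2 = s\<^sup>2 + t\<^sup>2"
  unfolding power2_norm_eq_inner
  by (simp add: inner_add_left inner_add_right inner_self_u inner_self_v
      orthogonal_uv orthogonal_vu power2_eq_square)

lemma orthonormal_expansion: "w = (w \<bullet> u) *\<^sub>R u + (w \<bullet> v) *\<^sub>R v"
proof -
  have "u \<noteq> v" "u \<noteq> 0" "v \<noteq> 0"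
    using inner_self_u orthogonal_uv norm_u norm_v by auto
  then have "independent {u, v}"
    by (intro pairwise_orthogonal_independent) (auto simp: pairwise_def orthogonal_def orthogonal_uv orthogonal_vu)
  moreover have "dim (UNIV :: (real^2) set) \<le> card {u, v}"
    using \<open>u \<noteq> v\<close> by simp
  ultimately have "w \<in> span {u, v}"
    using card_ge_dim_independent[of "{u, v}" UNIV] by auto
  then obtain \<alpha> \<beta> where "w - \<alpha> *\<^sub>R u = \<beta> *\<^sub>R v"
    by (auto simp: span_insert span_singleton)
  then have "w = \<alpha> *\<^sub>R u + \<beta> *\<^sub>R v"
    by (metis add.commute diff_add_cancel)
  then show ?thesis
    by (simp add: inner_add_left inner_self_u inner_self_v orthogonal_uv orthogonal_vu)
qed

definition grid_center :: "real^2 \<Rightarrow> nat \<Rightarrow> nat \<times> nat \<Rightarrow> real^2" where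
  "grid_center a n p = a + ((2 * real (fst p) + 1) / n) *\<^sub>R u + ((2 * real (snd p) + 1) / n) *\<^sub>R v"

definition grid_disks :: "real^2 \<Rightarrow> nat \<Rightarrow> (real^2) set" where
  "grid_disks a n = (\<Union>p\<in>{..<n} \<times> {..<n}. ball (grid_center a n p) (1 / n))"

lemma dist_grid_center:
  assumes "p \<noteq> q" "0 < n"
  shows "2 / n \<le> dist (grid_center a n p) (grid_center a n q)"
proof -
  define \<delta>\<^sub>1 where "\<delta>\<^sub>1 = real (fst p) - real (fst q)"
  define \<delta>\<^sub>2 where "\<delta>\<^sub>2 = real (snd p) - real (snd q)"
  have "(2 * real (fst p) + 1) / n - (2 * real (fst q) + 1) / n = 2 * \<delta>\<^sub>1 / n"
       "(2 * real (snd p) + 1) / n - (2 * real (snd q) + 1) / n = 2 * \<delta>\<^sub>2 / n"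
    by (simp_all add: \<delta>\<^sub>1_def \<delta>\<^sub>2_def diff_divide_distrib[symmetric] algebra_simps)
  moreover have "grid_center a n p - grid_center a n q
      = ((2 * real (fst p) + 1) / n - (2 * real (fst q) + 1) / n) *\<^sub>R u
      + ((2 * real (snd p) + 1) / n - (2 * real (snd q) + 1) / n) *\<^sub>R v"
    unfolding grid_center_def by (simp add: algebra_simps)
  ultimately have diff: "grid_center a n p - grid_center a n q = (2 * \<delta>\<^sub>1 / n) *\<^sub>R u + (2 * \<delta>\<^sub>2 / n) *\<^sub>R v"
    by simp
  have "(dist (grid_center a n p) (grid_center a n q))\<^sup>2 = (2 * \<delta>\<^sub>1 / n)\<^sup>2 + (2 * \<delta>\<^sub>2 / n)\<^sup>2"
    by (simp only: dist_norm diff power2_norm_scaleR_add)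
  also have "\<dots> = (2 / n)\<^sup>2 * (\<delta>\<^sub>1\<^sup>2 + \<delta>\<^sub>2\<^sup>2)"
    using assms(2) by (simp add: power2_eq_square field_simps)
  finally have "(dist (grid_center a n p) (grid_center a n q))\<^sup>2 = (2 / n)\<^sup>2 * (\<delta>\<^sub>1\<^sup>2 + \<delta>\<^sub>2\<^sup>2)" .
  moreover have "1 \<le> \<delta>\<^sub>1\<^sup>2 + \<delta>\<^sub>2\<^sup>2"
  proof (cases "fst p = fst q")
    case True
    with assms(1) have "snd p \<noteq> snd q" by (simp add: prod_eq_iff)
    with True show ?thesis
      using one_le_power2_diff_of_nat by (simp add: \<delta>\<^sub>1_def \<delta>\<^sub>2_def)
  next
    case False
    then show ?thesis
      using one_le_power2_diff_of_nat[OF False] zero_le_power2[of \<delta>\<^sub>2] unfolding \<delta>\<^sub>1_def by linarith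
  qed
  ultimately have "(2 / n)\<^sup>2 \<le> (dist (grid_center a n p) (grid_center a n q))\<^sup>2"
    by (metis mult_le_cancel_left1 zero_le_power2 not_le)
  then show ?thesis
    by (rule power2_le_imp_le) simp
qed

lemma disjoint_grid_balls:
  "p \<noteq> q \<Longrightarrow> 0 < n \<Longrightarrow> ball (grid_center a n p) (1 / n) \<inter> ball (grid_center a n q) (1 / n) = {}"
  using dist_grid_center by (intro disjoint_ballI) simp

lemma grid_ball_subset_square:
  assumes "p \<in> {..<n} \<times> {..<n}"
  shows "ball (grid_center a n p) (1 / n) \<subseteq> {a + s *\<^sub>R u + t *\<^sub>R v | s t. 0 < s \<and> s < 2 \<and> 0 < t \<and> t < 2}"
proof
  fix y assume y: "y \<in> ball (grid_center a n p) (1 / n)"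
  define s t where "s = (y - a) \<bullet> u" and "t = (y - a) \<bullet> v"
  have "y = a + s *\<^sub>R u + t *\<^sub>R v"
    using orthonormal_expansion[of "y - a"] by (simp add: s_def t_def algebra_simps)
  have "(y - grid_center a n p) \<bullet> u = s - (2 * real (fst p) + 1) / n"
       "(y - grid_center a n p) \<bullet> v = t - (2 * real (snd p) + 1) / n"
    by (simp_all add: s_def t_def grid_center_def inner_diff_left inner_add_left
        inner_self_u inner_self_v orthogonal_uv orthogonal_vu)
  moreover have "\<bar>(y - grid_center a n p) \<bullet> w\<bar> < 1 / n" if "norm w = 1" for w
    using Cauchy_Schwarz_ineq2[of "y - grid_center a n p" w] y that
    by (simp add: dist_norm norm_minus_commute)
  ultimately have "\<bar>s - (2 * real (fst p) + 1) / n\<bar> < 1 / n" "\<bar>t - (2 * real (snd p) + 1) / n\<bar> < 1 / n"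
    using norm_u norm_v by metis+
  then have "0 < s \<and> s < 2" "0 < t \<and> t < 2"
    using assms grid_coordinate_bounds[of "fst p" n] grid_coordinate_bounds[of "snd p" n] by auto
  with \<open>y = a + s *\<^sub>R u + t *\<^sub>R v\<close> show "y \<in> {a + s *\<^sub>R u + t *\<^sub>R v | s t. 0 < s \<and> s < 2 \<and> 0 < t \<and> t < 2}"
    by blast
qed

lemma finite_disjoint_disks_grid_disks:
  assumes "0 < n"
  shows "finite_disjoint_disks (grid_disks a n)"
  unfolding finite_disjoint_disks_def
proof (intro exI conjI)
  let ?D = "(\<lambda>p. (grid_center a n p, 1 / real n)) ` ({..<n} \<times> {..<n})"
  show "finite ?D" "\<forall>(c, r)\<in>?D. 0 < r"
    using assms by auto
  show "\<forall>d1\<in>?D. \<forall>d2\<in>?D. d1 \<noteq> d2 \<longrightarrow> ball (fst d1) (snd d1) \<inter> ball (fst d2) (snd d2) = {}"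
  proof (intro ballI impI)
    fix d1 d2 assume "d1 \<in> ?D" "d2 \<in> ?D" "d1 \<noteq> d2"
    then obtain p q where "d1 = (grid_center a n p, 1 / n)" "d2 = (grid_center a n q, 1 / n)" "p \<noteq> q"
      by auto
    then show "ball (fst d1) (snd d1) \<inter> ball (fst d2) (snd d2) = {}"
      using disjoint_grid_balls[OF _ assms] by simp
  qed
  show "grid_disks a n = (\<Union>(c, r)\<in>?D. ball c r)"
    unfolding grid_disks_def by auto
qed

lemma measure_grid_disks:
  assumes "0 < n"
  shows "measure lebesgue (grid_disks a n) = pi"
proof -
  have "measure lebesgue (grid_disks a n)
      = (\<Sum>p\<in>{..<n} \<times> {..<n}. measure lebesgue (ball (grid_center a n p) (1 / n)))"
    unfolding grid_disks_def
    using disjoint_grid_balls[OF _ assms]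
    by (intro measure_negligible_finite_Union_image) (auto simp: pairwise_def)
  also have "\<dots> = (\<Sum>p\<in>{..<n} \<times> {..<n}. pi * (1 / n)\<^sup>2)"
    by (intro sum.cong refl measure_ball_real2) simp
  also have "\<dots> = pi"
    using assms by (simp add: card_cartesian_product power2_eq_square)
  finally show ?thesis .
qed

lemma neumann_eig_grid_disks:
  assumes "k < n"
  shows "neumann_eig k (grid_disks a n) = 0"
proof (rule neumann_eig_eq_0_if_disjoint_open_parts)
  let ?B = "\<lambda>j. ball (grid_center a n (j, 0)) (1 / n)"
  have "0 < n" using assms by simp
  show "open (grid_disks a n)"
    unfolding grid_disks_def by blast
  fix i j assume "i \<le> k" "j \<le> k"
  show "open (?B j)" "?B j \<in> lmeasurable"
    by simp_all
  show "?B j \<noteq> {}"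
    using \<open>0 < n\<close> by simp
  show "?B j \<subseteq> grid_disks a n"
    using \<open>j \<le> k\<close> assms unfolding grid_disks_def by (intro UN_upper) auto
  show "i \<noteq> j \<Longrightarrow> ?B i \<inter> ?B j = {}"
    using disjoint_grid_balls[OF _ \<open>0 < n\<close>] by simp
  have "grid_disks a n - ?B j = (\<Union>p\<in>{..<n} \<times> {..<n} - {(j, 0)}. ball (grid_center a n p) (1 / n))"
    unfolding grid_disks_def using disjoint_grid_balls[OF _ \<open>0 < n\<close>, of _ "(j, 0)" a] by blast
  then show "open (grid_disks a n - ?B j)"
    by (metis open_UN open_ball)
qed

end

theorem mainTheorem11:
  fixes a u v :: "real^2" and S :: "(real^2) set"
  assumes "norm u = 1" and "norm v = 1" and "u \<bullet> v = 0"
    and "S = {a + s *\<^sub>R u + t *\<^sub>R v | s t. 0 < s \<and> s < 2 \<and> 0 < t \<and> t < 2}"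
  shows "\<exists>\<Omega> :: nat \<Rightarrow> (real^2) set.
           (\<forall>k. bounded (\<Omega> k) \<and> open (\<Omega> k) \<and> finite_disjoint_disks (\<Omega> k)
                \<and> \<Omega> k \<subseteq> S \<and> measure lebesgue (\<Omega> k) = pi)
         \<and> liminf (\<lambda>k. ereal (neumann_eig k (\<Omega> k) / neumann_eig k S)) = 0"
proof -
  interpret orthonormal_pair u v
    using assms(1-3) by unfold_locales
  define \<Omega> where "\<Omega> k = grid_disks a (Suc k)" for k
  have "bounded (\<Omega> k) \<and> open (\<Omega> k) \<and> finite_disjoint_disks (\<Omega> k)
        \<and> \<Omega> k \<subseteq> S \<and> measure lebesgue (\<Omega> k) = pi" for k
  proof (intro conjI)
    show "bounded (\<Omega> k)" "open (\<Omega> k)"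
      unfolding \<Omega>_def grid_disks_def by auto
    show "\<Omega> k \<subseteq> S"
      unfolding \<Omega>_def grid_disks_def assms(4) by (intro UN_least grid_ball_subset_square)
  qed (simp_all add: \<Omega>_def finite_disjoint_disks_grid_disks measure_grid_disks)
  moreover have "liminf (\<lambda>k. ereal (neumann_eig k (\<Omega> k) / neumann_eig k S)) = 0"
    by (simp add: \<Omega>_def neumann_eig_grid_disks zero_ereal_def Liminf_const)
  ultimately show ?thesis
    by blast
qed

end
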